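(* Let $G$ be a looped simple graph. (a) No element of $M[IAS(G)]$ is a coloop. (b) Two distinct elements of $M[IAS(G)]$ are in series if and only if they are the two non-loop elements of the vertex triple $\tau_G(v)$ of an isolated vertex $v$ of $G$ (and in that case they are also parallel).
   Context: A looped simple graph is a finite graph in which each vertex carries at most one loop and no two distinct vertices are joined by more than one edge; "neighbors" are distinct vertices joined by a non-loop edge, and a vertex is isolated if it has no neighbors (it may be looped). $A(G)$ is the $V(G)\times V(G)$ matrix over $GF(2)$ with diagonal entry $1$ exactly at looped vertices and off-diagonal entry $1$ exactly for adjacent pairs. $IAS(G)=(I\mid A(G)\mid A(G)+I)$ over $GF(2)$, rows indexed by $V(G)$; the $v$-columns of the three blocks are labelled $\phi_G(v),\chi_G(v),\psi_G(v)$. $M[IAS(G)]$ is the binary column matroid of $IAS(G)$ on $W(G)=\{\phi_G(v),\chi_G(v),\psi_G(v):v\in V(G)\}$, and $\tau_G(v)=\{\phi_G(v),\chi_G(v),\psi_G(v)\}$. A loop is an element in no basis; a coloop is an element in every basis. Two non-loop elements are parallel if they form a $2$-element circuit. Two non-coloop elements are in series if no basis excludes both of them (coloops are all considered in series with one another). *)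

theory Defs
  imports Main "HOL-Library.Z2"
begin

text \<open>A looped simple graph: finite vertex set V, symmetric irreflexive adjacency E
  (non-loop edges, only between vertices of V), and a predicate L marking looped vertices.\<close>

definition looped_simple_graph :: "'a set \<Rightarrow> ('a \<Rightarrow> 'a \<Rightarrow> bool) \<Rightarrow> bool" where
  "looped_simple_graph V E \<longleftrightarrow> finite V \<and> (\<forall>v w. E v w \<longrightarrow> E w v)
     \<and> (\<forall>v. \<not> E v v) \<and> (\<forall>v w. E v w \<longrightarrow> v \<in> V \<and> w \<in> V)"

definition isolated :: "'a set \<Rightarrow> ('a \<Rightarrow> 'a \<Rightarrow> bool) \<Rightarrow> 'a \<Rightarrow> bool" where
  "isolated V E v \<longleftrightarrow> v \<in> V \<and> \<not> (\<exists>w\<in>V. w \<noteq> v \<and> E v w)"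

definition adjm :: "('a \<Rightarrow> 'a \<Rightarrow> bool) \<Rightarrow> ('a \<Rightarrow> bool) \<Rightarrow> 'a \<Rightarrow> 'a \<Rightarrow> bit" where
  "adjm E L u v = (if u = v then (if L v then 1 else 0) else (if E u v then 1 else 0))"

datatype blk = Phi | Chi | Psi

text \<open>Elements of W(G): (v,Phi) = phi_G(v), (v,Chi) = chi_G(v), (v,Psi) = psi_G(v).\<close>
definition W :: "'a set \<Rightarrow> ('a \<times> blk) set" where
  "W V = V \<times> UNIV"

definition tau :: "'a \<Rightarrow> ('a \<times> blk) set" where
  "tau v = {(v, Phi), (v, Chi), (v, Psi)}"

text \<open>Column of IAS(G) = (I | A | A+I) labelled by an element; entry in row u.\<close>
fun iascol :: "('a \<Rightarrow> 'a \<Rightarrow> bool) \<Rightarrow> ('a \<Rightarrow> bool) \<Rightarrow> 'a \<times> blk \<Rightarrow> 'a \<Rightarrow> bit" where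
  "iascol E L (v, Phi) u = (if u = v then 1 else 0)"
| "iascol E L (v, Chi) u = adjm E L u v"
| "iascol E L (v, Psi) u = adjm E L u v + (if u = v then 1 else 0)"

definition ias_indep :: "'a set \<Rightarrow> ('a \<Rightarrow> 'a \<Rightarrow> bool) \<Rightarrow> ('a \<Rightarrow> bool) \<Rightarrow> ('a \<times> blk) set \<Rightarrow> bool" where
  "ias_indep V E L S \<longleftrightarrow> S \<subseteq> W V \<and>
     (\<forall>c :: 'a \<times> blk \<Rightarrow> bit. (\<forall>u\<in>V. (\<Sum>x\<in>S. c x * iascol E L x u) = 0) \<longrightarrow> (\<forall>x\<in>S. c x = 0))"

definition ias_basis :: "'a set \<Rightarrow> ('a \<Rightarrow> 'a \<Rightarrow> bool) \<Rightarrow> ('a \<Rightarrow> bool) \<Rightarrow> ('a \<times> blk) set \<Rightarrow> bool" where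
  "ias_basis V E L B \<longleftrightarrow> ias_indep V E L B \<and>
     (\<forall>S. B \<subset> S \<longrightarrow> S \<subseteq> W V \<longrightarrow> \<not> ias_indep V E L S)"

definition ias_circuit :: "'a set \<Rightarrow> ('a \<Rightarrow> 'a \<Rightarrow> bool) \<Rightarrow> ('a \<Rightarrow> bool) \<Rightarrow> ('a \<times> blk) set \<Rightarrow> bool" where
  "ias_circuit V E L C \<longleftrightarrow> C \<subseteq> W V \<and> \<not> ias_indep V E L C \<and>
     (\<forall>D. D \<subset> C \<longrightarrow> ias_indep V E L D)"

definition ias_loop :: "'a set \<Rightarrow> ('a \<Rightarrow> 'a \<Rightarrow> bool) \<Rightarrow> ('a \<Rightarrow> bool) \<Rightarrow> 'a \<times> blk \<Rightarrow> bool" where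
  "ias_loop V E L x \<longleftrightarrow> x \<in> W V \<and> (\<forall>B. ias_basis V E L B \<longrightarrow> x \<notin> B)"

definition ias_coloop :: "'a set \<Rightarrow> ('a \<Rightarrow> 'a \<Rightarrow> bool) \<Rightarrow> ('a \<Rightarrow> bool) \<Rightarrow> 'a \<times> blk \<Rightarrow> bool" where
  "ias_coloop V E L x \<longleftrightarrow> x \<in> W V \<and> (\<forall>B. ias_basis V E L B \<longrightarrow> x \<in> B)"

definition ias_parallel :: "'a set \<Rightarrow> ('a \<Rightarrow> 'a \<Rightarrow> bool) \<Rightarrow> ('a \<Rightarrow> bool) \<Rightarrow> 'a \<times> blk \<Rightarrow> 'a \<times> blk \<Rightarrow> bool" where
  "ias_parallel V E L x y \<longleftrightarrow> \<not> ias_loop V E L x \<and> \<not> ias_loop V E L y \<and>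
     x \<noteq> y \<and> ias_circuit V E L {x, y}"

definition ias_series :: "'a set \<Rightarrow> ('a \<Rightarrow> 'a \<Rightarrow> bool) \<Rightarrow> ('a \<Rightarrow> bool) \<Rightarrow> 'a \<times> blk \<Rightarrow> 'a \<times> blk \<Rightarrow> bool" where
  "ias_series V E L x y \<longleftrightarrow> x \<in> W V \<and> y \<in> W V \<and>
     ((ias_coloop V E L x \<and> ias_coloop V E L y) \<or>
      (\<not> ias_coloop V E L x \<and> \<not> ias_coloop V E L y \<and>
       \<not> (\<exists>B. ias_basis V E L B \<and> x \<notin> B \<and> y \<notin> B)))"

end

theory Submission
  imports Defs
begin

text \<open>The \<open>\<phi>\<close> columns of \<open>IAS(G)\<close> form an identity matrix, so a set of columns is spanning
  as soon as it spans every \<open>\<phi>(w)\<close>.  After deleting two elements \<open>x, y\<close>, each \<open>\<phi>(w)\<close> is still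
  spanned: as \<open>\<chi>(w) + \<psi>(w)\<close>, or from the \<open>\<phi>(u)\<close>, \<open>u \<noteq> w\<close>, together with a remaining column
  having entry 1 in row \<open>w\<close>, namely the element of \<open>{\<chi>(w), \<psi>(w)}\<close> with diagonal entry 1 or
  \<open>\<chi>(n)\<close> for a neighbour \<open>n\<close> of \<open>w\<close>.  This fails only if \<open>{x, y}\<close> consists of \<open>\<phi>(v)\<close> and
  that diagonal-one element for an isolated vertex \<open>v\<close>; so some basis avoids \<open>x\<close> and \<open>y\<close>, and
  taking \<open>x = y\<close> there are no coloops.  For isolated \<open>v\<close> the two columns coincide and are the
  only columns meeting row \<open>v\<close> (the third element of \<open>\<tau>(v)\<close> is the zero column, a loop), so every
  basis contains one of them and they form a parallel pair.\<close>

declare add_bit_eq_xor [simp del] mult_bit_eq_and [simp del]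

lemma bit_add_self [simp]: "(a::bit) + a = 0"
  by (cases a) simp_all

definition lin_indep :: "'r set \<Rightarrow> ('b \<Rightarrow> 'r \<Rightarrow> 'k::field) \<Rightarrow> 'b set \<Rightarrow> bool" where
  "lin_indep R col S \<longleftrightarrow>
     (\<forall>c. (\<forall>u\<in>R. (\<Sum>x\<in>S. c x * col x u) = 0) \<longrightarrow> (\<forall>x\<in>S. c x = 0))"

definition in_span :: "'r set \<Rightarrow> ('b \<Rightarrow> 'r \<Rightarrow> 'k::field) \<Rightarrow> 'b set \<Rightarrow> ('r \<Rightarrow> 'k) \<Rightarrow> bool" where
  "in_span R col S f \<longleftrightarrow> (\<exists>c. \<forall>u\<in>R. f u = (\<Sum>x\<in>S. c x * col x u))"

lemma in_span_col:
  assumes "finite S" "z \<in> S"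
  shows "in_span R col S (col z)"
  unfolding in_span_def
proof (intro exI ballI)
  fix u
  have "S \<inter> {x. x = z} = {z}" using assms(2) by blast
  then show "col z u = (\<Sum>x\<in>S. of_bool (x = z) * col x u)"
    using assms(1) by simp
qed

lemma in_span_mono:
  assumes "in_span R col S f" "S \<subseteq> S'" "finite S'"
  shows "in_span R col S' f"
proof -
  obtain c where c: "\<forall>u\<in>R. f u = (\<Sum>x\<in>S. c x * col x u)"
    using assms(1) unfolding in_span_def by blast
  have "(\<Sum>x\<in>S'. (if x \<in> S then c x else 0) * col x u) = (\<Sum>x\<in>S. c x * col x u)" for u
    by (rule sum.mono_neutral_cong_right[OF assms(3) assms(2)]) auto
  with c show ?thesis
    unfolding in_span_def by (intro exI[of _ "\<lambda>x. if x \<in> S then c x else 0"]) simp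
qed

lemma in_span_trans:
  assumes "finite S" "finite T" "\<forall>t\<in>T. in_span R col S (col t)" "in_span R col T f"
  shows "in_span R col S f"
proof -
  obtain d where d: "\<forall>u\<in>R. f u = (\<Sum>t\<in>T. d t * col t u)"
    using assms(4) unfolding in_span_def by blast
  from assms(3) have "\<forall>t\<in>T. \<exists>c. \<forall>u\<in>R. col t u = (\<Sum>x\<in>S. c x * col x u)"
    unfolding in_span_def .
  then obtain C where C: "\<forall>t\<in>T. \<forall>u\<in>R. col t u = (\<Sum>x\<in>S. C t x * col x u)"
    by (rule bchoice[elim_format]) blast
  have "f u = (\<Sum>x\<in>S. (\<Sum>t\<in>T. d t * C t x) * col x u)" if u: "u \<in> R" for u
  proof -
    have "f u = (\<Sum>t\<in>T. d t * col t u)"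
      using d u by simp
    also have "\<dots> = (\<Sum>t\<in>T. d t * (\<Sum>x\<in>S. C t x * col x u))"
    proof (rule sum.cong[OF refl])
      fix t assume "t \<in> T"
      show "d t * col t u = d t * (\<Sum>x\<in>S. C t x * col x u)"
        by (rule arg_cong[where f="(*) (d t)"], rule C[rule_format, OF \<open>t \<in> T\<close> u])
    qed
    also have "\<dots> = (\<Sum>t\<in>T. \<Sum>x\<in>S. d t * C t x * col x u)"
      by (simp add: sum_distrib_left mult.assoc)
    also have "\<dots> = (\<Sum>x\<in>S. (\<Sum>t\<in>T. d t * C t x) * col x u)"
      by (subst sum.swap) (simp add: sum_distrib_right)
    finally show ?thesis .
  qed
  then show ?thesis
    unfolding in_span_def by (intro exI[of _ "\<lambda>x. \<Sum>t\<in>T. d t * C t x"]) simp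
qed

lemma lin_indep_insert:
  assumes "lin_indep R col S" "\<not> in_span R col S (col z)" "finite S" "z \<notin> S"
  shows "lin_indep R col (insert z S)"
  unfolding lin_indep_def
proof (intro allI impI)
  fix c
  assume "\<forall>u\<in>R. (\<Sum>x\<in>insert z S. c x * col x u) = 0"
  then have h: "c z * col z u + (\<Sum>x\<in>S. c x * col x u) = 0" if "u \<in> R" for u
    using that assms(3,4) by simp
  have "c z = 0"
  proof (rule ccontr)
    assume cz: "c z \<noteq> 0"
    have "col z u = (\<Sum>x\<in>S. (- inverse (c z) * c x) * col x u)" if "u \<in> R" for u
    proof -
      have "c z * col z u = - (\<Sum>x\<in>S. c x * col x u)"
        using h[OF that] by (simp add: eq_neg_iff_add_eq_0)
      moreover have "col z u = inverse (c z) * (c z * col z u)" using cz by simp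
      ultimately have "col z u = - inverse (c z) * (\<Sum>x\<in>S. c x * col x u)" by simp
      then show ?thesis by (simp add: sum_distrib_left mult.assoc)
    qed
    then have "in_span R col S (col z)"
      unfolding in_span_def by (intro exI[of _ "\<lambda>x. - inverse (c z) * c x"] ballI) simp
    with assms(2) show False ..
  qed
  with h have "\<forall>u\<in>R. (\<Sum>x\<in>S. c x * col x u) = 0" by simp
  with assms(1) \<open>c z = 0\<close> show "\<forall>x\<in>insert z S. c x = 0"
    unfolding lin_indep_def by blast
qed

lemma not_lin_indep_if_in_span:
  assumes "finite S" "z \<in> S" "B \<subseteq> S" "z \<notin> B" "in_span R col B (col z)"
  shows "\<not> lin_indep R col S"
proof
  assume indep: "lin_indep R col S"
  obtain c where c: "\<forall>u\<in>R. col z u = (\<Sum>x\<in>B. c x * col x u)"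
    using assms(5) unfolding in_span_def by blast
  define d where "d x = (if x = z then -1 else if x \<in> B then c x else 0)" for x
  have fB: "finite B" using assms(1,3) finite_subset by blast
  have "(\<Sum>x\<in>S. d x * col x u) = 0" if u: "u \<in> R" for u
  proof -
    have "(\<Sum>x\<in>S. d x * col x u) = (\<Sum>x\<in>insert z B. d x * col x u)"
      by (rule sum.mono_neutral_right[OF assms(1)]) (use assms(2,3) in \<open>auto simp: d_def\<close>)
    also have "\<dots> = - col z u + (\<Sum>x\<in>B. c x * col x u)"
      using fB assms(4) by (simp add: d_def) (rule sum.cong; auto)
    finally show ?thesis using c u by simp
  qed
  with indep assms(2) have "d z = 0" unfolding lin_indep_def by blast
  then show False by (simp add: d_def)
qed

lemma lin_indep_extend_spanning:
  assumes "finite T" "A \<subseteq> T" "lin_indep R col A"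
  obtains B where "A \<subseteq> B" "B \<subseteq> T" "lin_indep R col B" "\<forall>t\<in>T. in_span R col B (col t)"
proof -
  define F where "F = {B. A \<subseteq> B \<and> B \<subseteq> T \<and> lin_indep R col B}"
  have "F \<subseteq> Pow T" unfolding F_def by blast
  then have "finite F" using assms(1) by (simp add: finite_subset)
  moreover have "A \<in> F" unfolding F_def using assms by blast
  ultimately obtain B where B: "B \<in> F" and maximal: "\<forall>S\<in>F. B \<le> S \<longrightarrow> B = S"
    by (meson finite_has_maximal2)
  have fB: "finite B" using B assms(1) finite_subset unfolding F_def by blast
  have "in_span R col B (col t)" if t: "t \<in> T" for t
  proof (cases "t \<in> B")
    case True
    then show ?thesis using fB by (rule in_span_col[rotated])
  next
    case False
    have "insert t B \<notin> F" using maximal False by blast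
    then have "\<not> lin_indep R col (insert t B)" using B t unfolding F_def by blast
    moreover have "lin_indep R col B" using B unfolding F_def by blast
    ultimately show ?thesis using lin_indep_insert[OF _ _ fB False] by blast
  qed
  then show ?thesis using that B unfolding F_def by blast
qed

lemma lin_indep_singleton:
  assumes "u \<in> R" "col x u \<noteq> 0"
  shows "lin_indep R col {x}"
  using assms unfolding lin_indep_def by auto

lemma lin_indep_nonzero_col:
  fixes col :: "'b \<Rightarrow> 'r \<Rightarrow> 'k::field"
  assumes "lin_indep R col S" "finite S" "x \<in> S"
  shows "\<exists>u\<in>R. col x u \<noteq> 0"
proof (rule ccontr)
  assume "\<not> ?thesis"
  moreover have "S \<inter> {y. y = x} = {x}" using assms(3) by blast
  ultimately have "\<forall>u\<in>R. (\<Sum>y\<in>S. of_bool (y = x) * col y u) = 0"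
    using assms(2) by simp
  with assms(1)[unfolded lin_indep_def, THEN spec[of _ "\<lambda>y. of_bool (y = x)"]] assms(3)
  have "of_bool (x = x) = (0::'k)" by blast
  then show False by simp
qed

lemma ias_indep_iff_lin_indep: "ias_indep V E L S \<longleftrightarrow> S \<subseteq> W V \<and> lin_indep V (iascol E L) S"
  unfolding ias_indep_def lin_indep_def ..

lemma mem_W_iff [simp]: "(v, k) \<in> W V \<longleftrightarrow> v \<in> V"
  by (simp add: W_def)

lemma finite_W: "finite V \<Longrightarrow> finite (W V)"
proof -
  have "(UNIV :: blk set) = {Phi, Chi, Psi}" using blk.exhaust by auto
  then have "finite (UNIV :: blk set)" by (metis finite.emptyI finite_insert)
  then show "finite V \<Longrightarrow> finite (W V)" unfolding W_def by (rule finite_cartesian_product[rotated])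
qed

lemma in_span_Phi_cols:
  assumes "finite V"
  shows "in_span V (iascol E L) ((\<lambda>w. (w, Phi)) ` V) f"
proof -
  have "f u = (\<Sum>x\<in>(\<lambda>w. (w, Phi)) ` V. f (fst x) * iascol E L x u)" if "u \<in> V" for u
  proof -
    have "(\<Sum>x\<in>(\<lambda>w. (w, Phi)) ` V. f (fst x) * iascol E L x u) = (\<Sum>w\<in>V. f w * iascol E L (w, Phi) u)"
      by (subst sum.reindex) (auto simp: inj_on_def)
    also have "\<dots> = f u"
      using that assms by (simp add: if_distrib sum.delta' cong: if_cong)
    finally show ?thesis by simp
  qed
  then show ?thesis
    unfolding in_span_def by (intro exI[of _ "\<lambda>x. f (fst x)"]) simp
qed

lemma ias_basis_if_spans_Phi:
  assumes "finite V" "B \<subseteq> W V" "lin_indep V (iascol E L) B"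
    "\<forall>v\<in>V. in_span V (iascol E L) B (iascol E L (v, Phi))"
  shows "ias_basis V E L B"
  unfolding ias_basis_def ias_indep_iff_lin_indep
proof (intro conjI allI impI notI)
  fix S assume S: "B \<subset> S" "S \<subseteq> W V" "S \<subseteq> W V \<and> lin_indep V (iascol E L) S"
  have fB: "finite B" using assms(1,2) finite_W finite_subset by blast
  have "in_span V (iascol E L) B f" for f
    using assms(1,4) by (intro in_span_trans[OF fB _ _ in_span_Phi_cols[OF assms(1)]]) auto
  moreover obtain z where "z \<in> S" "z \<notin> B" using S(1) by blast
  moreover have "finite S" using S(2) assms(1) finite_W finite_subset by blast
  ultimately show False
    using not_lin_indep_if_in_span S(1,3) by (metis psubset_imp_subset)
qed (use assms in auto)

lemma ias_basis_extend:
  assumes "finite V" "A \<subseteq> T" "T \<subseteq> W V" "lin_indep V (iascol E L) A"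
    "\<forall>v\<in>V. in_span V (iascol E L) T (iascol E L (v, Phi))"
  obtains B where "A \<subseteq> B" "B \<subseteq> T" "ias_basis V E L B"
proof -
  have fT: "finite T" using assms(1,3) finite_W finite_subset by blast
  obtain B where B: "A \<subseteq> B" "B \<subseteq> T" "lin_indep V (iascol E L) B"
    and spans: "\<forall>t\<in>T. in_span V (iascol E L) B (iascol E L t)"
    using lin_indep_extend_spanning[OF fT assms(2,4)] by blast
  have "finite B" using B(2) fT finite_subset by blast
  then have "\<forall>v\<in>V. in_span V (iascol E L) B (iascol E L (v, Phi))"
    using in_span_trans[OF _ fT spans] assms(5) by blast
  moreover have "B \<subseteq> W V" using B(2) assms(3) by (rule order_trans)
  ultimately show ?thesis
    using that[OF B(1,2)] ias_basis_if_spans_Phi[OF assms(1) _ B(3)] by blast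
qed

text \<open>Otherwise \<open>\<phi>(u)\<close>, whose only nonzero entry is in row \<open>u\<close>, could be added to the basis.\<close>
lemma ias_basis_row_nonzero:
  assumes "finite V" "ias_basis V E L B" "u \<in> V"
  shows "\<exists>b\<in>B. iascol E L b u \<noteq> 0"
proof (rule ccontr)
  assume zero: "\<not> ?thesis"
  have B: "B \<subseteq> W V" "lin_indep V (iascol E L) B"
    using assms(2) unfolding ias_basis_def ias_indep_iff_lin_indep by blast+
  have fB: "finite B" using B(1) assms(1) finite_W finite_subset by blast
  have notin: "(u, Phi) \<notin> B" using zero by force
  have "\<not> in_span V (iascol E L) B (iascol E L (u, Phi))"
  proof
    assume "in_span V (iascol E L) B (iascol E L (u, Phi))"
    then obtain c where "iascol E L (u, Phi) u = (\<Sum>x\<in>B. c x * iascol E L x u)"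
      using assms(3) unfolding in_span_def by blast
    with zero show False by simp
  qed
  then have "ias_indep V E L (insert (u, Phi) B)"
    using lin_indep_insert[OF B(2) _ fB notin] B(1) assms(3)
    unfolding ias_indep_iff_lin_indep by simp
  moreover have "B \<subset> insert (u, Phi) B" "insert (u, Phi) B \<subseteq> W V"
    using notin B(1) assms(3) by auto
  ultimately show False using assms(2) unfolding ias_basis_def by blast
qed

lemma not_ias_loop_if_nonzero:
  assumes "finite V" "x \<in> W V" "u \<in> V" "iascol E L x u \<noteq> 0"
  shows "\<not> ias_loop V E L x"
proof -
  have "\<forall>v\<in>V. in_span V (iascol E L) (W V) (iascol E L (v, Phi))"
    using assms(1) by (simp add: in_span_col finite_W)
  moreover have "lin_indep V (iascol E L) {x}"
    using assms(3,4) by (rule lin_indep_singleton)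
  ultimately obtain B where "{x} \<subseteq> B" "ias_basis V E L B"
    using ias_basis_extend[OF assms(1) _ order_refl] assms(2) by (metis empty_subsetI insert_subset)
  then show ?thesis unfolding ias_loop_def by blast
qed

lemma ias_loop_if_zero:
  assumes "finite V" "x \<in> W V" "\<forall>u\<in>V. iascol E L x u = 0"
  shows "ias_loop V E L x"
  unfolding ias_loop_def
proof (intro conjI allI impI notI)
  fix B assume "ias_basis V E L B" "x \<in> B"
  moreover from this have "B \<subseteq> W V" "lin_indep V (iascol E L) B"
    unfolding ias_basis_def ias_indep_iff_lin_indep by blast+
  moreover from this have "finite B" using assms(1) finite_W finite_subset by blast
  ultimately obtain u where "u \<in> V" "iascol E L x u \<noteq> 0" by (metis lin_indep_nonzero_col)
  with assms(3) show False by simp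
qed (rule assms(2))

text \<open>Of \<open>\<chi>(w)\<close> and \<open>\<psi>(w)\<close>, exactly one column has entry 1 in row \<open>w\<close>: \<open>\<chi>(w)\<close> if \<open>w\<close> is looped,
  \<open>\<psi>(w)\<close> otherwise.\<close>
definition diag_one :: "('a \<Rightarrow> bool) \<Rightarrow> 'a \<Rightarrow> 'a \<times> blk" where
  "diag_one L w = (if L w then (w, Chi) else (w, Psi))"

definition diag_zero :: "('a \<Rightarrow> bool) \<Rightarrow> 'a \<Rightarrow> 'a \<times> blk" where
  "diag_zero L w = (if L w then (w, Psi) else (w, Chi))"

lemma iascol_diag_one_self [simp]: "iascol E L (diag_one L w) w = 1"
  by (simp add: diag_one_def adjm_def)

lemma iascol_diag_zero_self [simp]: "iascol E L (diag_zero L w) w = 0"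
  by (simp add: diag_zero_def adjm_def)

lemma diag_one_in_W [simp]: "diag_one L w \<in> W V \<longleftrightarrow> w \<in> V"
  and diag_zero_in_W [simp]: "diag_zero L w \<in> W V \<longleftrightarrow> w \<in> V"
  by (simp_all add: diag_one_def diag_zero_def)

lemma diag_neq [simp]:
  "diag_one L w \<noteq> (w, Phi)" "(w, Phi) \<noteq> diag_one L w"
  "diag_zero L w \<noteq> (w, Phi)" "(w, Phi) \<noteq> diag_zero L w"
  "diag_one L w \<noteq> diag_zero L w" "diag_zero L w \<noteq> diag_one L w"
  by (simp_all add: diag_one_def diag_zero_def)

lemma snd_diag_one: "snd (diag_one L w) \<noteq> Phi"
  by (simp add: diag_one_def)

lemma Chi_Psi_eq_diag: "{(w, Chi), (w, Psi)} = {diag_one L w, diag_zero L w}"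
  by (auto simp: diag_one_def diag_zero_def)

lemma tau_eq_diag: "tau w = {(w, Phi), diag_one L w, diag_zero L w}"
  using Chi_Psi_eq_diag[of w L] by (auto simp: tau_def)

lemma Phi_in_span_Chi_Psi: "in_span V (iascol E L) {(w, Chi), (w, Psi)} (iascol E L (w, Phi))"
proof -
  have "iascol E L (w, Phi) u = iascol E L (w, Chi) u + iascol E L (w, Psi) u" for u
    by (simp add: add.commute)
  then show ?thesis unfolding in_span_def by (intro exI[of _ "\<lambda>_. 1"]) simp
qed

lemma looped_simple_graph_finite: "looped_simple_graph V E \<Longrightarrow> finite V"
  by (simp add: looped_simple_graph_def)

lemma isolated_no_edge:
  assumes "looped_simple_graph V E" "isolated V E v"
  shows "\<not> E v w" "\<not> E w v"
proof -
  have sym: "E w v \<Longrightarrow> E v w" and dom: "E v w \<Longrightarrow> w \<in> V" and irrefl: "\<not> E v v"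
    using assms(1) unfolding looped_simple_graph_def by blast+
  show "\<not> E v w" using assms(2) dom irrefl unfolding isolated_def by (cases "w = v") auto
  with sym show "\<not> E w v" by blast
qed

lemma iascol_isolated_row:
  assumes "looped_simple_graph V E" "isolated V E v" "w \<noteq> v"
  shows "iascol E L (w, k) v = 0"
  using isolated_no_edge[OF assms(1,2)] assms(3) by (cases k) (simp_all add: adjm_def)

lemma iascol_diag_one_isolated:
  assumes "looped_simple_graph V E" "isolated V E v"
  shows "iascol E L (diag_one L v) = iascol E L (v, Phi)"
proof
  fix u show "iascol E L (diag_one L v) u = iascol E L (v, Phi) u"
    using isolated_no_edge[OF assms] by (auto simp: diag_one_def adjm_def)
qed

lemma iascol_diag_zero_isolated:
  assumes "looped_simple_graph V E" "isolated V E v"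
  shows "iascol E L (diag_zero L v) u = 0"
  using isolated_no_edge[OF assms] by (auto simp: diag_zero_def adjm_def)

text \<open>Over GF(2), \<open>\<phi>(w) = z + (\<Sum>u \<noteq> w. z\<^sub>u \<phi>(u))\<close> whenever \<open>z\<^sub>w = 1\<close>.\<close>
lemma Phi_in_span_if_unit_entry:
  assumes "finite V" "T \<subseteq> W V" "\<forall>u\<in>V - {w}. (u, Phi) \<in> T"
    "z \<in> T" "snd z \<noteq> Phi" "iascol E L z w = 1"
  shows "in_span V (iascol E L) T (iascol E L (w, Phi))"
proof -
  let ?P = "(\<lambda>u. (u, Phi)) ` (V - {w})"
  define c where "c x = (if x = z then 1 else iascol E L z (fst x))" for x
  have Phi_neq_z: "(u, Phi) \<noteq> z" for u using assms(5) by auto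
  then have zP: "z \<notin> ?P" by blast
  have "iascol E L (w, Phi) r = (\<Sum>x\<in>insert z ?P. c x * iascol E L x r)" if r: "r \<in> V" for r
  proof -
    have "(\<Sum>x\<in>?P. c x * iascol E L x r) = (\<Sum>u\<in>V - {w}. iascol E L z u * iascol E L (u, Phi) r)"
      by (subst sum.reindex) (auto simp: inj_on_def c_def Phi_neq_z intro!: sum.cong)
    also have "\<dots> = (if r \<in> V - {w} then iascol E L z r else 0)"
      using assms(1) by (simp add: if_distrib sum.delta' cong: if_cong)
    finally have "(\<Sum>x\<in>insert z ?P. c x * iascol E L x r)
        = iascol E L z r + (if r \<in> V - {w} then iascol E L z r else 0)"
      using assms(1) zP by (simp add: c_def)
    also have "\<dots> = iascol E L (w, Phi) r"
      using r assms(6) by auto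
    finally show ?thesis ..
  qed
  then have "in_span V (iascol E L) (insert z ?P) (iascol E L (w, Phi))"
    unfolding in_span_def by (intro exI[of _ c]) simp
  moreover have "insert z ?P \<subseteq> T" using assms(3,4) by blast
  moreover have "finite T" using assms(1,2) finite_W finite_subset by blast
  ultimately show ?thesis by (rule in_span_mono)
qed

lemma Phi_in_span_without_pair:
  assumes G: "looped_simple_graph V E" and w: "w \<in> V"
    and not_iso: "\<not> (isolated V E w \<and> {x, y} = {(w, Phi), diag_one L w})"
  shows "in_span V (iascol E L) (W V - {x, y}) (iascol E L (w, Phi))"
proof -
  let ?T = "W V - {x, y}"
  have fV: "finite V" using G by (rule looped_simple_graph_finite)
  have fT: "finite ?T" using fV finite_W by blast
  show ?thesis
  proof (cases "(w, Phi) \<in> ?T")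
    case True
    then show ?thesis by (rule in_span_col[OF fT])
  next
    case False
    then have "(w, Phi) \<in> {x, y}" using w by simp
    define z where "z = (if x = (w, Phi) then y else x)"
    have xy: "{x, y} = {(w, Phi), z}" using \<open>(w, Phi) \<in> {x, y}\<close> unfolding z_def by auto
    have Phi_T: "\<forall>u\<in>V - {w}. (u, Phi) \<in> ?T" if "fst z = w"
      using that unfolding xy by auto
    consider "z \<notin> {diag_one L w, diag_zero L w}" | "z = diag_zero L w" | "z = diag_one L w"
      by blast
    then show ?thesis
    proof cases
      case 1
      then have "{(w, Chi), (w, Psi)} \<subseteq> ?T"
        using w Chi_Psi_eq_diag[of w L] unfolding xy by auto
      then show ?thesis by (rule in_span_mono[OF Phi_in_span_Chi_Psi _ fT])
    next
      case 2
      then have "fst z = w" by (simp add: diag_zero_def)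
      moreover have "diag_one L w \<in> ?T" using w unfolding xy 2 by simp
      ultimately show ?thesis
        using Phi_in_span_if_unit_entry[OF fV _ Phi_T _ snd_diag_one iascol_diag_one_self] by blast
    next
      case 3
      then have "\<not> isolated V E w" using not_iso xy by blast
      then obtain n where n: "n \<in> V" "n \<noteq> w" "E w n" using w unfolding isolated_def by blast
      have "fst z = w" using 3 by (simp add: diag_one_def)
      moreover have "(n, Chi) \<in> ?T" using n unfolding xy 3 by (simp add: diag_one_def)
      moreover have "iascol E L (n, Chi) w = 1" using n by (simp add: adjm_def)
      ultimately show ?thesis
        using Phi_in_span_if_unit_entry[OF fV _ Phi_T, of "(n, Chi)"] by simp
    qed
  qed
qed

lemma ias_basis_avoiding_pair:
  assumes G: "looped_simple_graph V E"
    and not_iso: "\<forall>w. \<not> (isolated V E w \<and> {x, y} = {(w, Phi), diag_one L w})"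
  obtains B where "ias_basis V E L B" "x \<notin> B" "y \<notin> B"
proof -
  have fV: "finite V" using G by (rule looped_simple_graph_finite)
  have "lin_indep V (iascol E L) {}" unfolding lin_indep_def by simp
  moreover have "\<forall>w\<in>V. in_span V (iascol E L) (W V - {x, y}) (iascol E L (w, Phi))"
    using Phi_in_span_without_pair[OF G _ not_iso[rule_format]] by blast
  ultimately obtain B where "{} \<subseteq> B" "B \<subseteq> W V - {x, y}" "ias_basis V E L B"
    by (rule ias_basis_extend[OF fV empty_subsetI Diff_subset])
  then show ?thesis by (intro that[of B]) auto
qed

lemma not_ias_coloop:
  assumes "looped_simple_graph V E"
  shows "\<not> ias_coloop V E L x"
proof -
  have "\<forall>w. {x, x} \<noteq> {(w, Phi), diag_one L w}"
    using diag_neq(1) by (auto simp: doubleton_eq_iff)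
  then obtain B where "ias_basis V E L B" "x \<notin> B"
    using ias_basis_avoiding_pair[OF assms] by blast
  then show ?thesis unfolding ias_coloop_def by blast
qed

lemma not_ias_loop_Phi_diag_one:
  assumes "finite V" "v \<in> V"
  shows "\<not> ias_loop V E L (v, Phi)" "\<not> ias_loop V E L (diag_one L v)"
  using not_ias_loop_if_nonzero[OF assms(1) _ assms(2)] assms(2) by simp_all

lemma nonloops_tau_isolated:
  assumes G: "looped_simple_graph V E" and iso: "isolated V E v"
  shows "{z \<in> tau v. \<not> ias_loop V E L z} = {(v, Phi), diag_one L v}"
proof -
  have fV: "finite V" using G by (rule looped_simple_graph_finite)
  have v: "v \<in> V" using iso unfolding isolated_def by blast
  have "ias_loop V E L (diag_zero L v)"
    using ias_loop_if_zero[OF fV] v iascol_diag_zero_isolated[OF G iso] by simp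
  with not_ias_loop_Phi_diag_one[OF fV v] show ?thesis unfolding tau_eq_diag[of v L] by auto
qed

lemma ias_basis_meets_isolated:
  assumes G: "looped_simple_graph V E" and iso: "isolated V E v" and B: "ias_basis V E L B"
  shows "(v, Phi) \<in> B \<or> diag_one L v \<in> B"
proof -
  have fV: "finite V" using G by (rule looped_simple_graph_finite)
  have v: "v \<in> V" using iso unfolding isolated_def by blast
  obtain b where b: "b \<in> B" "iascol E L b v \<noteq> 0"
    using ias_basis_row_nonzero[OF fV B v] by blast
  obtain w k where b_eq: "b = (w, k)" by (cases b)
  with b(2) iascol_isolated_row[OF G iso] have "w = v" by blast
  then have "b \<in> tau v" unfolding b_eq by (cases k) (auto simp: tau_def)
  with b show ?thesis unfolding tau_eq_diag[of v L] by auto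
qed

lemma ias_parallel_commute: "ias_parallel V E L x y \<longleftrightarrow> ias_parallel V E L y x"
  unfolding ias_parallel_def by (auto simp: insert_commute)

lemma isolated_ias_parallel:
  assumes G: "looped_simple_graph V E" and iso: "isolated V E v"
  shows "ias_parallel V E L (v, Phi) (diag_one L v)"
proof -
  have fV: "finite V" using G by (rule looped_simple_graph_finite)
  have v: "v \<in> V" using iso unfolding isolated_def by blast
  note not_ias_loop_Phi_diag_one[OF fV v]
  moreover have "\<not> ias_indep V E L {(v, Phi), diag_one L v}"
  proof
    assume "ias_indep V E L {(v, Phi), diag_one L v}"
    then have "lin_indep V (iascol E L) {(v, Phi), diag_one L v}"
      by (simp add: ias_indep_iff_lin_indep)
    moreover have "\<forall>u\<in>V. (\<Sum>x\<in>{(v, Phi), diag_one L v}. 1 * iascol E L x u) = 0"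
      using iascol_diag_one_isolated[OF G iso] by simp
    ultimately have "\<forall>x\<in>{(v, Phi), diag_one L v}. (1::bit) = 0"
      unfolding lin_indep_def by (rule spec[of _ "\<lambda>_. 1", THEN mp])
    then have "(1::bit) = 0" by blast
    then show False by simp
  qed
  moreover have "ias_indep V E L D" if "D \<subset> {(v, Phi), diag_one L v}" for D
  proof -
    have "D = {} \<or> D = {(v, Phi)} \<or> D = {diag_one L v}" using that by auto
    then show ?thesis
      unfolding ias_indep_iff_lin_indep using v
      by (auto simp: lin_indep_def intro: lin_indep_singleton[of v])
  qed
  ultimately show ?thesis
    unfolding ias_parallel_def ias_circuit_def using v by auto
qed

lemma ias_series_iff_isolated:
  assumes G: "looped_simple_graph V E" and "x \<in> W V" "y \<in> W V"
  shows "ias_series V E L x y \<longleftrightarrow> (\<exists>v. isolated V E v \<and> {x, y} = {(v, Phi), diag_one L v})"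
proof -
  have "ias_series V E L x y \<longleftrightarrow> \<not> (\<exists>B. ias_basis V E L B \<and> x \<notin> B \<and> y \<notin> B)"
    unfolding ias_series_def using assms not_ias_coloop[OF G] by blast
  also have "\<dots> \<longleftrightarrow> (\<exists>v. isolated V E v \<and> {x, y} = {(v, Phi), diag_one L v})"
  proof
    show "\<not> (\<exists>B. ias_basis V E L B \<and> x \<notin> B \<and> y \<notin> B) \<Longrightarrow> \<exists>v. isolated V E v \<and> {x, y} = {(v, Phi), diag_one L v}"
      using ias_basis_avoiding_pair[OF G] by blast
  next
    assume "\<exists>v. isolated V E v \<and> {x, y} = {(v, Phi), diag_one L v}"
    then obtain v where iso: "isolated V E v" and xy: "{x, y} = {(v, Phi), diag_one L v}" by blast
    show "\<not> (\<exists>B. ias_basis V E L B \<and> x \<notin> B \<and> y \<notin> B)"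
    proof
      assume "\<exists>B. ias_basis V E L B \<and> x \<notin> B \<and> y \<notin> B"
      then obtain B where "ias_basis V E L B" "{x, y} \<inter> B = {}" by blast
      with ias_basis_meets_isolated[OF G iso] show False unfolding xy by blast
    qed
  qed
  finally show ?thesis .
qed

theorem proposition9p1:
  fixes V :: "'a set" and E :: "'a \<Rightarrow> 'a \<Rightarrow> bool" and L :: "'a \<Rightarrow> bool"
  assumes "looped_simple_graph V E"
  shows "(\<forall>x\<in>W V. \<not> ias_coloop V E L x) \<and>
         (\<forall>x\<in>W V. \<forall>y\<in>W V. x \<noteq> y \<longrightarrow>
            ((ias_series V E L x y \<longleftrightarrow>
               (\<exists>v. isolated V E v \<and> {x, y} = {z \<in> tau v. \<not> ias_loop V E L z}))
             \<and> (ias_series V E L x y \<longrightarrow> ias_parallel V E L x y)))"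
proof (intro conjI ballI impI)
  fix x y assume xy: "x \<in> W V" "y \<in> W V"
  have series: "ias_series V E L x y \<longleftrightarrow> (\<exists>v. isolated V E v \<and> {x, y} = {(v, Phi), diag_one L v})"
    using ias_series_iff_isolated[OF assms xy] .
  moreover have "{x, y} = {z \<in> tau v. \<not> ias_loop V E L z} \<longleftrightarrow> {x, y} = {(v, Phi), diag_one L v}"
    if "isolated V E v" for v
    using nonloops_tau_isolated[OF assms that] by simp
  ultimately show "ias_series V E L x y \<longleftrightarrow> (\<exists>v. isolated V E v \<and> {x, y} = {z \<in> tau v. \<not> ias_loop V E L z})"
    by blast
  show "ias_parallel V E L x y" if s: "ias_series V E L x y"
  proof -
    obtain v where iso: "isolated V E v" and pair: "{x, y} = {(v, Phi), diag_one L v}"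
      using series s by blast
    have "ias_parallel V E L (v, Phi) (diag_one L v)" "ias_parallel V E L (diag_one L v) (v, Phi)"
      using isolated_ias_parallel[OF assms iso] ias_parallel_commute by blast+
    with pair show ?thesis by (auto simp: doubleton_eq_iff)
  qed
qed (use not_ias_coloop[OF assms] in blast)

end
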